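(* Let $A$ be a non-trivial finite group and $m$ an odd positive integer with $\gcd(|A|,m)=1$. Let $B$ be a maximal subgroup of $A$ with $\psi(B)\ge\psi(B')$ for every maximal subgroup $B'$ of $A$. (i) If $\psi(A)/\psi(B)\le 7$, then $B\times\mathcal{C}_m$ is a maximal subgroup of $A\times\mathcal{C}_m$ attaining the maximum value of $\psi$ among the maximal subgroups (equivalently, among all proper subgroups) of $A\times\mathcal{C}_m$. (ii) If $B$ is cyclic and $|A:B|=2$, then $\psi(A)/\psi(B)\le7$, so the conclusion of (i) holds.
   Context: $\psi(G)=\sum_{x\in G}o(x)$ for a finite group $G$; $\mathcal{C}_n$ is the cyclic group of order $n$. *)

theory Defs
  imports "HOL-Algebra.Algebra"
begin

definition psi :: "('a, 'b) monoid_scheme \<Rightarrow> nat" where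
  "psi G = (\<Sum>x\<in>carrier G. group.ord G x)"

definition maximal_subgroup :: "'a set \<Rightarrow> ('a, 'b) monoid_scheme \<Rightarrow> bool" where
  "maximal_subgroup H G \<longleftrightarrow> subgroup H G \<and> H \<noteq> carrier G \<and>
     (\<forall>K. subgroup K G \<and> H \<subseteq> K \<longrightarrow> K = H \<or> K = carrier G)"

abbreviation Cyc :: "nat \<Rightarrow> int monoid" where
  "Cyc m \<equiv> integer_mod_group m"

end

(*
  (i) As gcd(|A|, m) = 1, every subgroup of A x C_m is a product H1 x H2 and psi is multiplicative
  on such products. If H1 is proper, it lies in a maximal subgroup, whose psi is at most psi(B).
  If H1 = A, then H2 is a proper subgroup of the cyclic group C_m of odd order, so it lies in a
  subgroup of index p for an odd prime p, and psi(C_pn) >= 7 psi(C_n) gives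
  psi(A) psi(H2) <= 7 psi(B) psi(H2) <= psi(B) psi(C_m).

  (ii) Write A = B u yB. Then (yc)^2 = y^2 t(c) with t(c) = (y^-1 c y) c an endomorphism of the
  abelian group B, and o(yc) <= 2 o((yc)^2). The elements y^2 t(c) lie in the centraliser Z of y
  in B, each one is hit |ker t| times, and |Z| <= 2 |t(B)| because t is squaring on Z and a cyclic
  group has at most two square roots of 1. Since the average order of a subgroup of a cyclic group
  is at most that of the group, the sum of o(yc) over c in B is at most 4 psi(B), so
  psi(A) <= 5 psi(B).
*)

theory Submission
  imports Defs
begin

lemma ord_subgroup:
  assumes "group G" "subgroup H G"
  shows "group.ord (G\<lparr>carrier := H\<rparr>) x = group.ord G x"
proof -
  have "group (G\<lparr>carrier := H\<rparr>)" using assms subgroup.subgroup_is_group by blast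
  then show ?thesis using assms by (simp add: group.ord_def nat_pow_def)
qed

lemma psi_subgroup:
  assumes "group G" "subgroup H G"
  shows "psi (G\<lparr>carrier := H\<rparr>) = (\<Sum>x\<in>H. group.ord G x)"
  unfolding psi_def using ord_subgroup[OF assms] by simp

lemma psi_gt_0:
  assumes "group G" "finite (carrier G)"
  shows "0 < psi G"
proof -
  have "group.ord G \<one>\<^bsub>G\<^esub> \<le> psi G"
    unfolding psi_def using assms by (intro member_le_sum) (simp_all add: group.is_monoid)
  then show ?thesis using assms by (simp add: group.ord_id)
qed

lemma psi_subgroup_mono:
  assumes "group G" "finite (carrier G)" "subgroup H G" "subgroup K G" "H \<subseteq> K"
  shows "psi (G\<lparr>carrier := H\<rparr>) \<le> psi (G\<lparr>carrier := K\<rparr>)"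
proof -
  have "finite K" using assms(2,4) subgroup.subset finite_subset by blast
  then show ?thesis using psi_subgroup[OF assms(1,3)] psi_subgroup[OF assms(1,4)] assms(5)
    by (simp add: sum_mono2)
qed

lemma maximal_subgroup_imp_proper:
  "maximal_subgroup H G \<Longrightarrow> subgroup H G \<and> H \<noteq> carrier G"
  unfolding maximal_subgroup_def by blast

lemma maximal_subgroup_above:
  assumes "finite (carrier G)" "subgroup H G" "H \<noteq> carrier G"
  obtains M where "maximal_subgroup M G" "H \<subseteq> M"
proof -
  define S where "S = {K. subgroup K G \<and> H \<subseteq> K \<and> K \<noteq> carrier G}"
  have "finite S"
    unfolding S_def using assms(1) by (auto dest: subgroup.subset intro: finite_subset[of _ "Pow (carrier G)"])
  moreover have "H \<in> S" using assms S_def by simp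
  ultimately obtain M where M: "M \<in> S" "H \<subseteq> M" "\<forall>K\<in>S. M \<subseteq> K \<longrightarrow> M = K"
    using finite_has_maximal2 by blast
  then have "maximal_subgroup M G" unfolding maximal_subgroup_def S_def by auto
  then show thesis using M(2) by (rule that)
qed

lemma psi_proper_subgroup_le_best_maximal:
  assumes "group G" "finite (carrier G)" "subgroup H G" "H \<noteq> carrier G"
    and "\<forall>M. maximal_subgroup M G \<longrightarrow> psi (G\<lparr>carrier := M\<rparr>) \<le> psi (G\<lparr>carrier := B\<rparr>)"
  shows "psi (G\<lparr>carrier := H\<rparr>) \<le> psi (G\<lparr>carrier := B\<rparr>)"
proof -
  obtain M where M: "maximal_subgroup M G" "H \<subseteq> M"
    using maximal_subgroup_above[OF assms(2-4)] by blast
  then have "psi (G\<lparr>carrier := H\<rparr>) \<le> psi (G\<lparr>carrier := M\<rparr>)"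
    using psi_subgroup_mono[OF assms(1-3)] by (simp add: maximal_subgroup_def)
  also have "\<dots> \<le> psi (G\<lparr>carrier := B\<rparr>)" using assms(5) M(1) by blast
  finally show ?thesis .
qed

lemma (in group) ord_le_two_mult_ord_square:
  assumes "x \<in> carrier G"
  shows "ord x \<le> 2 * ord (x \<otimes> x)"
proof -
  have "x \<otimes> x = x [^] (2::nat)" using assms by (simp add: numeral_2_eq_2)
  then have "ord (x \<otimes> x) = ord x div gcd (ord x) 2" using ord_pow_gen[OF assms, of 2] by simp
  moreover have "ord x = (ord x div gcd (ord x) 2) * gcd (ord x) 2" by simp
  then have "ord x \<le> (ord x div gcd (ord x) 2) * 2"
    by (metis gcd_le2_nat mult_le_mono2 zero_neq_numeral)
  ultimately show ?thesis by simp
qed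

lemma (in group) subgroup_nat_pow_closed:
  assumes "subgroup H G" "h \<in> H" shows "h [^] (n :: nat) \<in> H"
  using subgroup_int_pow_closed[OF assms, of "int n"] by (simp add: int_pow_int)

lemma hom_sum_fibres:
  assumes "group G" "group H" "finite (carrier G)" "f \<in> hom G H"
  shows "(\<Sum>x\<in>carrier G. F (f x)) = card (kernel G H f) * (\<Sum>z\<in>f ` carrier G. F z)"
proof -
  interpret h: group_hom G H f by (intro group_hom.intro group_hom_axioms.intro assms)
  have fibre: "{x \<in> carrier G. f x = f x0} = kernel G H f #>\<^bsub>G\<^esub> x0" if x0: "x0 \<in> carrier G" for x0
  proof (intro equalityI subsetI)
    fix x assume x: "x \<in> {x \<in> carrier G. f x = f x0}"
    then have "x \<otimes>\<^bsub>G\<^esub> inv\<^bsub>G\<^esub> x0 \<in> kernel G H f"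
      using x0 by (simp add: kernel_def)
    moreover have "x = (x \<otimes>\<^bsub>G\<^esub> inv\<^bsub>G\<^esub> x0) \<otimes>\<^bsub>G\<^esub> x0" using x x0 by (simp add: h.G.m_assoc)
    ultimately show "x \<in> kernel G H f #>\<^bsub>G\<^esub> x0" unfolding r_coset_def by blast
  next
    fix x assume "x \<in> kernel G H f #>\<^bsub>G\<^esub> x0"
    then obtain t where "t \<in> carrier G" "f t = \<one>\<^bsub>H\<^esub>" "x = t \<otimes>\<^bsub>G\<^esub> x0"
      unfolding r_coset_def kernel_def by blast
    then show "x \<in> {x \<in> carrier G. f x = f x0}" using x0 by simp
  qed
  have card_fibre: "card {x \<in> carrier G. f x = z} = card (kernel G H f)" if "z \<in> f ` carrier G" for z
    using that fibre h.G.card_rcosets_equal[OF h.G.rcosetsI, of "kernel G H f"] h.subgroup_kernel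
    by (auto dest: subgroup.subset)
  have "(\<Sum>x\<in>carrier G. F (f x)) = (\<Sum>z\<in>f ` carrier G. \<Sum>x\<in>{x \<in> carrier G. f x = z}. F (f x))"
    by (rule sum.image_gen[OF assms(3)])
  also have "\<dots> = (\<Sum>z\<in>f ` carrier G. \<Sum>x\<in>{x \<in> carrier G. f x = z}. F z)"
    by (intro sum.cong) auto
  also have "\<dots> = (\<Sum>z\<in>f ` carrier G. card (kernel G H f) * F z)"
    using card_fibre by (intro sum.cong) auto
  finally show ?thesis by (simp add: sum_distrib_left)
qed

section \<open>The sum of element orders of a cyclic group\<close>

\<comment> \<open>psi of the cyclic group Z/nZ, in which x has order n div gcd n x.\<close>
definition psi_cyclic :: "nat \<Rightarrow> nat" where
  "psi_cyclic n = (\<Sum>x<n. n div gcd n x)"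

lemma sum_lessThan_mult_regroup:
  fixes F :: "nat \<Rightarrow> 'a::comm_monoid_add"
  shows "(\<Sum>x<e * k. F x) = (\<Sum>y<k. \<Sum>t<e. F (y + k * t))"
proof -
  have "(\<Sum>x<e * k. F x) = (\<Sum>t<e. \<Sum>y<k. F (y + k * t))"
  proof (induction e)
    case (Suc e)
    have "(\<Sum>x<Suc e * k. F x) = (\<Sum>x<e * k. F x) + (\<Sum>x\<in>{e * k..<e * k + k}. F x)"
      by (simp add: sum.atLeastLessThan_concat[symmetric] lessThan_atLeast0 add.commute)
    also have "(\<Sum>x\<in>{e * k..<e * k + k}. F x) = (\<Sum>y<k. F (y + k * e))"
      using sum.shift_bounds_nat_ivl[of F 0 "e * k" k]
      by (simp add: lessThan_atLeast0 add.commute mult.commute)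
    finally show ?case using Suc by simp
  qed simp
  then show ?thesis by (simp add: sum.swap[of _ "{..<e}"])
qed

lemma psi_cyclic_mult_ge:
  assumes "e > 0"
  shows "e * psi_cyclic k \<le> psi_cyclic (e * k)"
proof -
  have "k div gcd k y \<le> (e * k) div gcd (e * k) (y + k * t)" if "y < k" for y t
  proof -
    have "gcd (e * k) (y + k * t) dvd e * gcd k (y + k * t)" by (simp add: gcd_mult_distrib_nat)
    then have "gcd (e * k) (y + k * t) \<le> e * gcd k (y + k * t)"
      using that assms by (simp add: dvd_imp_le)
    then have "(e * k) div (e * gcd k (y + k * t)) \<le> (e * k) div gcd (e * k) (y + k * t)"
      using that assms by (intro div_le_mono2) auto
    moreover have "gcd k (y + k * t) = gcd k y"
      by (metis gcd_add_mult add.commute mult.commute)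
    ultimately show ?thesis using assms by simp
  qed
  then have "(\<Sum>y<k. \<Sum>t<e. k div gcd k y) \<le> (\<Sum>y<k. \<Sum>t<e. (e * k) div gcd (e * k) (y + k * t))"
    by (intro sum_mono) auto
  then show ?thesis
    unfolding psi_cyclic_def sum_lessThan_mult_regroup[where e = e]
    by (simp add: sum_distrib_left mult.commute)
qed

lemma card_prime_dvd_affine_le_1:
  fixes p a b :: nat
  assumes "Factorial_Ring.prime p" "coprime a b"
  shows "card {t\<in>{..<p}. p dvd a + b * t} \<le> 1"
proof -
  have unique: "t1 = t2" if "t1 < p" "t2 < p" "p dvd a + b * t1" "p dvd a + b * t2" "t1 \<le> t2" for t1 t2
  proof -
    have "\<not> p dvd b"
      using that assms by (metis coprime_common_divisor dvd_add_left_iff dvd_mult2 not_prime_unit)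
    have "p dvd (a + b * t2) - (a + b * t1)" using that by (intro dvd_diff_nat)
    then have "p dvd t2 - t1" using \<open>\<not> p dvd b\<close> assms(1)
      by (simp add: diff_mult_distrib2[symmetric] prime_dvd_mult_iff)
    moreover have "t2 - t1 < p" using that by linarith
    ultimately show ?thesis using \<open>t1 \<le> t2\<close> by (cases "t2 - t1 = 0") (auto dest: nat_dvd_not_less)
  qed
  have "\<forall>t1\<in>{t\<in>{..<p}. p dvd a + b * t}. \<forall>t2\<in>{t\<in>{..<p}. p dvd a + b * t}. t1 = t2"
    using unique by (metis (no_types, lifting) le_cases lessThan_iff mem_Collect_eq)
  then show ?thesis by (simp add: card_le_Suc0_iff_eq)
qed

\<comment> \<open>Over an element y of order q in Z/nZ lie the p elements y + n t of Z/pnZ; all of them but at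
  most one have order p q, so their orders add up to at least q + (p - 1) p q \<ge> 7 q.\<close>
lemma sum_div_gcd_prime_fibre_ge:
  fixes p n y :: nat
  assumes p: "Factorial_Ring.prime p" "p \<noteq> 2" and "y < n"
  shows "7 * (n div gcd n y) \<le> (\<Sum>t<p. (p * n) div gcd (p * n) (y + n * t))"
proof -
  define g where "g = gcd n y"
  define q where "q = n div g"
  have "g > 0" using assms by (simp add: g_def)
  have "p \<ge> 3" using prime_ge_2_nat[OF p(1)] p(2) by linarith
  obtain n' y' where n': "n = n' * g" and y': "y = y' * g" and "coprime n' y'"
    using gcd_coprime_exists[of n y] \<open>g > 0\<close> unfolding g_def by blast
  define S where "S = {t\<in>{..<p}. p dvd y' + n' * t}"
  have summand: "(p * n) div gcd (p * n) (y + n * t) = (if t \<in> S then q else p * q)" if "t < p" for t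
  proof -
    have "gcd (p * n) (y + n * t) = gcd (p * n') (y' + n' * t) * g"
      by (simp add: n' y' gcd_mult_distrib_nat algebra_simps)
    also have "gcd (p * n') (y' + n' * t) = gcd p (y' + n' * t)"
      using \<open>coprime n' y'\<close>
      by (metis add.commute gcd.commute gcd_add_mult gcd_mult_left_right_cancel is_unit_gcd mult.commute)
    also have "gcd p (y' + n' * t) = (if t \<in> S then p else 1)"
      using that p(1) by (simp add: S_def prime_imp_coprime_nat)
    finally show ?thesis using \<open>g > 0\<close> p(1) by (simp add: q_def n' prime_gt_0_nat)
  qed
  have "card S \<le> 1"
    unfolding S_def using card_prime_dvd_affine_le_1[OF p(1)] \<open>coprime n' y'\<close>
    by (simp add: coprime_commute)
  have "S \<subseteq> {..<p}" by (auto simp: S_def)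
  have "(\<Sum>t<p. (p * n) div gcd (p * n) (y + n * t)) = (\<Sum>t<p. if t \<in> S then q else p * q)"
    using summand by (intro sum.cong) auto
  also have "\<dots> = card S * q + (p - card S) * (p * q)"
    using \<open>S \<subseteq> {..<p}\<close>
    by (simp add: sum.If_cases Int_absorb1 Diff_eq[symmetric] card_Diff_subset finite_subset)
  finally have sum_eq: "(\<Sum>t<p. (p * n) div gcd (p * n) (y + n * t)) = card S * q + (p - card S) * (p * q)" .
  have "2 * 3 * q \<le> (p - card S) * p * q"
    using \<open>card S \<le> 1\<close> \<open>p \<ge> 3\<close> by (intro mult_le_mono) auto
  moreover have "3 * 3 * q \<le> p * p * q"
    using \<open>p \<ge> 3\<close> by (intro mult_le_mono) auto
  ultimately have "7 * q \<le> card S * q + (p - card S) * (p * q)"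
    using \<open>card S \<le> 1\<close> by (cases "card S") (auto simp: algebra_simps)
  then show ?thesis using sum_eq by (simp add: q_def g_def)
qed

lemma psi_cyclic_odd_prime_mult_ge:
  assumes "Factorial_Ring.prime p" "p \<noteq> 2"
  shows "7 * psi_cyclic n \<le> psi_cyclic (p * n)"
proof -
  have "(\<Sum>y<n. 7 * (n div gcd n y)) \<le> (\<Sum>y<n. \<Sum>t<p. (p * n) div gcd (p * n) (y + n * t))"
    using sum_div_gcd_prime_fibre_ge[OF assms] by (intro sum_mono) auto
  then show ?thesis
    unfolding psi_cyclic_def sum_lessThan_mult_regroup[where e = p] by (simp add: sum_distrib_left)
qed

lemma (in group) cyclic_group_powers:
  assumes "finite (carrier G)" "cyclic_group G"
  obtains g where "g \<in> carrier G" "ord g = order G" "carrier G = (\<lambda>j. g [^] j) ` {..<order G}"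
proof -
  obtain g where g: "g \<in> carrier G" "subgroup_generated G {g} = G"
    using assms(2) unfolding cyclic_group_def by blast
  then have carrier: "carrier G = generate G {g}"
    by (metis carrier_subgroup_generated inf.absorb2 empty_subsetI insert_subset)
  then have "ord g = order G" using generate_pow_card[OF g(1)] by (simp add: order_def)
  moreover have "carrier G = (\<lambda>j. g [^] j) ` {..<ord g}"
    using ord_ge_1[OF assms(1) g(1)] unfolding carrier generate_pow_on_finite_carrier[OF assms(1) g(1)]
      ord_elems[OF assms(1) g(1)] by auto
  ultimately show thesis using g(1) that by simp
qed

lemma (in group) psi_cyclic_group:
  assumes "finite (carrier G)" "cyclic_group G"
  shows "psi G = psi_cyclic (order G)"
proof -
  obtain g where g: "g \<in> carrier G" "ord g = order G" "carrier G = (\<lambda>j. g [^] j) ` {..<order G}"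
    using cyclic_group_powers[OF assms] .
  have "0 < order G" using assms(1) order_gt_0_iff_finite by blast
  then have "inj_on (\<lambda>j. g [^] j) {..<order G}"
    using ord_inj[OF g(1)] g(2) by (simp add: atLeast0AtMost lessThan_Suc_atMost[symmetric])
  then have "psi G = (\<Sum>j\<in>{..<order G}. ord (g [^] j))"
    unfolding psi_def using g(3) by (simp add: sum.reindex)
  also have "\<dots> = psi_cyclic (order G)"
    unfolding psi_cyclic_def using g(1,2) \<open>0 < order G\<close> by (intro sum.cong) (auto simp: ord_pow_gen)
  finally show ?thesis .
qed

lemma (in group) psi_subgroup_cyclic_le:
  assumes fin: "finite (carrier G)" and cyc: "cyclic_group G" and K: "subgroup K G"
  shows "psi (G\<lparr>carrier := K\<rparr>) \<le> psi_cyclic (card K)"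
proof -
  obtain g where g: "g \<in> carrier G" "ord g = order G" "carrier G = (\<lambda>j. g [^] j) ` {..<order G}"
    using cyclic_group_powers[OF fin cyc] .
  define k where "k = card K"
  define e where "e = card (rcosets K)"
  have e: "order G = e * k" using lagrange[OF K] by (simp add: e_def k_def)
  have "0 < order G" using fin order_gt_0_iff_finite by blast
  then have "e > 0" "k > 0" using e by auto
  \<comment> \<open>Orders of elements of K divide k, and the powers of g of order dividing k are those of g^e.\<close>
  have "K \<subseteq> (\<lambda>i. g [^] (e * i)) ` {..<k}"
  proof
    fix v assume "v \<in> K"
    then obtain j where j: "j < order G" "v = g [^] j" using g(3) subgroup.subset[OF K] by auto
    have "group.ord (G\<lparr>carrier := K\<rparr>) v dvd order (G\<lparr>carrier := K\<rparr>)"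
      using group.ord_dvd_group_order[OF subgroup.subgroup_is_group[OF K is_group]] \<open>v \<in> K\<close> by simp
    then have "ord v dvd k" using ord_subgroup[OF is_group K] by (simp add: order_def k_def)
    then have "v [^] k = \<one>" using \<open>v \<in> K\<close> subgroup.subset[OF K] pow_eq_id by blast
    then have "g [^] (j * k) = \<one>" using j(2) g(1) by (simp add: nat_pow_pow)
    then have "e * k dvd j * k" using pow_eq_id[OF g(1)] g(2) e by simp
    then obtain i where "j = e * i" using \<open>k > 0\<close> by auto
    moreover have "i < k" using j(1) e \<open>j = e * i\<close> by simp
    ultimately show "v \<in> (\<lambda>i. g [^] (e * i)) ` {..<k}" using j(2) by blast
  qed
  then have "psi (G\<lparr>carrier := K\<rparr>) \<le> (\<Sum>v\<in>(\<lambda>i. g [^] (e * i)) ` {..<k}. ord v)"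
    using psi_subgroup[OF is_group K] by (simp add: sum_mono2)
  also have "\<dots> \<le> (\<Sum>i<k. ord (g [^] (e * i)))"
    using sum_image_le[of "{..<k}" ord "\<lambda>i. g [^] (e * i)"] by (simp add: o_def)
  also have "\<dots> = psi_cyclic k"
    unfolding psi_cyclic_def using g(1) g(2) e \<open>e > 0\<close> \<open>k > 0\<close>
    by (intro sum.cong) (auto simp: ord_pow_gen gcd_mult_distrib_nat[symmetric])
  finally show ?thesis unfolding k_def .
qed

lemma (in group) card_mult_psi_subgroup_cyclic_le:
  assumes fin: "finite (carrier G)" and cyc: "cyclic_group G" and K: "subgroup K G"
  shows "order G * psi (G\<lparr>carrier := K\<rparr>) \<le> card K * psi G"
proof -
  define e where "e = card (rcosets K)"
  have e: "order G = e * card K" using lagrange[OF K] by (simp add: e_def)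
  have "e > 0" using e fin order_gt_0_iff_finite by (cases e) auto
  have "order G * psi (G\<lparr>carrier := K\<rparr>) \<le> card K * (e * psi_cyclic (card K))"
    using psi_subgroup_cyclic_le[OF fin cyc K] e by simp
  also have "\<dots> \<le> card K * psi G"
    using psi_cyclic_mult_ge[OF \<open>e > 0\<close>] psi_cyclic_group[OF fin cyc] e by simp
  finally show ?thesis .
qed

lemma (in group) psi_proper_subgroup_cyclic_odd:
  assumes fin: "finite (carrier G)" and cyc: "cyclic_group G" and "odd (order G)"
    and K: "subgroup K G" "K \<noteq> carrier G"
  shows "7 * psi (G\<lparr>carrier := K\<rparr>) \<le> psi G"
proof -
  define e where "e = card (rcosets K)"
  have e: "order G = e * card K" using lagrange[OF K(1)] by (simp add: e_def)
  have "card K < order G"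
    using K subgroup.subset fin unfolding order_def by (intro psubset_card_mono) auto
  then have "e \<noteq> 1" using e by auto
  then obtain p where p: "Factorial_Ring.prime p" "p dvd e" using prime_factor_nat by blast
  then obtain f where f: "e = p * f" by blast
  have "p \<noteq> 2" using p \<open>odd (order G)\<close> e by auto
  have "f > 0" using e f fin order_gt_0_iff_finite by (cases f) auto
  have "psi (G\<lparr>carrier := K\<rparr>) \<le> psi_cyclic (card K)"
    by (rule psi_subgroup_cyclic_le[OF fin cyc K(1)])
  also have "\<dots> \<le> f * psi_cyclic (card K)" using \<open>f > 0\<close> by simp
  also have "\<dots> \<le> psi_cyclic (f * card K)" by (rule psi_cyclic_mult_ge[OF \<open>f > 0\<close>])
  finally have "7 * psi (G\<lparr>carrier := K\<rparr>) \<le> 7 * psi_cyclic (f * card K)" by simp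
  also have "\<dots> \<le> psi_cyclic (p * (f * card K))"
    by (rule psi_cyclic_odd_prime_mult_ge[OF p(1) \<open>p \<noteq> 2\<close>])
  also have "\<dots> = psi G"
    using psi_cyclic_group[OF fin cyc] e f by (simp add: mult.assoc)
  finally show ?thesis .
qed

lemma (in group) card_square_roots_one_cyclic_le_2:
  assumes "finite (carrier G)" "cyclic_group G"
  shows "card {t \<in> carrier G. t \<otimes> t = \<one>} \<le> 2"
proof -
  obtain g where g: "g \<in> carrier G" "ord g = order G" "carrier G = (\<lambda>j. g [^] j) ` {..<order G}"
    using cyclic_group_powers[OF assms] .
  have "{t \<in> carrier G. t \<otimes> t = \<one>} \<subseteq> {g [^] (0::nat), g [^] (order G div 2)}"
  proof (rule subsetI)
    fix t assume "t \<in> {t \<in> carrier G. t \<otimes> t = \<one>}"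
    then obtain j where j: "j < order G" "t = g [^] j" "t \<otimes> t = \<one>" using g(3) by auto
    then have "g [^] (j + j) = \<one>" using g(1) by (simp add: nat_pow_mult)
    then obtain q where q: "j + j = order G * q" using pow_eq_id[OF g(1)] g(2) by auto
    then have "q < 2" using j(1) by (metis add_less_mono mult_2 mult_less_cancel1 mult.commute)
    then have "j = 0 \<or> j = order G div 2" using q by (cases q) auto
    then show "t \<in> {g [^] (0::nat), g [^] (order G div 2)}" using j(2) by auto
  qed
  then show ?thesis by (rule card_mono[rotated, THEN order_trans]) (auto simp: card_insert_le_m1)
qed

lemma order_integer_mod_group: "m > 0 \<Longrightarrow> order (integer_mod_group m) = m"
  by (simp add: order_def carrier_integer_mod_group)

lemma cyclic_integer_mod_group:
  assumes "m > 0"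
  shows "cyclic_group (integer_mod_group m)"
proof -
  have "carrier (Cyc m) = range (\<lambda>n::int. (1 mod int m) [^]\<^bsub>Cyc m\<^esub> n)"
  proof -
    have "(\<lambda>n::int. (1 mod int m) [^]\<^bsub>Cyc m\<^esub> n) = (\<lambda>n. n mod int m)"
      by (simp add: int_pow_integer_mod_group mod_mult_right_eq)
    moreover have "range (\<lambda>n::int. n mod int m) = {0..<int m}"
      using assms by (auto simp: image_iff) (metis mod_pos_pos_trivial)
    ultimately show ?thesis using assms by (simp add: carrier_integer_mod_group)
  qed
  moreover have "1 mod int m \<in> carrier (Cyc m)" using assms by (simp add: carrier_integer_mod_group)
  ultimately show ?thesis using group.cyclic_group[OF group_integer_mod_group] by blast
qed

section \<open>Direct products of groups of coprime order\<close>

lemma DirProd_nat_pow: "(a, c) [^]\<^bsub>G \<times>\<times> K\<^esub> (n::nat) = (a [^]\<^bsub>G\<^esub> n, c [^]\<^bsub>K\<^esub> n)"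
  by (induct n) simp_all

lemma ord_DirProd:
  assumes "group G" "group K" "a \<in> carrier G" "c \<in> carrier K"
  shows "group.ord (G \<times>\<times> K) (a, c) = lcm (group.ord G a) (group.ord K c)"
proof -
  interpret P: group "G \<times>\<times> K" using assms DirProd_group by blast
  show ?thesis using assms by (simp add: P.ord_unique DirProd_nat_pow group.pow_eq_id)
qed

lemma ord_DirProd_coprime:
  assumes "group G" "group K" "coprime (order G) (order K)" "a \<in> carrier G" "c \<in> carrier K"
  shows "group.ord (G \<times>\<times> K) (a, c) = group.ord G a * group.ord K c"
proof -
  have "coprime (group.ord G a) (group.ord K c)"
    using assms coprime_divisors group.ord_dvd_group_order by metis
  then show ?thesis using ord_DirProd[OF assms(1,2,4,5)] by (simp add: lcm_coprime)
qed

lemma (in group) nat_pow_order_mult_Suc: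
  assumes "finite (carrier G)" "x \<in> carrier G"
  shows "x [^] (order G * k + 1) = x"
  using assms by (simp add: nat_pow_mult[symmetric] nat_pow_pow[symmetric] pow_order_eq_1)

lemma subgroup_DirProd_coprime_eq_Times:
  assumes G: "group G" and K: "group K" and fin: "finite (carrier G)" "finite (carrier K)"
    and cop: "coprime (order G) (order K)" and S: "subgroup S (G \<times>\<times> K)"
  shows "S = fst ` S \<times> snd ` S"
proof
  show "S \<subseteq> fst ` S \<times> snd ` S" by force
next
  interpret G: group G by fact
  interpret K: group K by fact
  interpret P: group "G \<times>\<times> K" using DirProd_group[OF G K] .
  have "order K \<noteq> 0" "order G \<noteq> 0" using fin G.order_gt_0_iff_finite K.order_gt_0_iff_finite by auto
  then obtain x y u v where xy: "order K * x = order G * y + 1" and uv: "order G * u = order K * v + 1"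
    using bezout_nat[of "order K" "order G"] bezout_nat[of "order G" "order K"] cop
    by (metis coprime_iff_gcd_eq_1 gcd.commute)
  have S_carrier: "S \<subseteq> carrier G \<times> carrier K" using subgroup.subset[OF S] by simp
  \<comment> \<open>By Bezout, the power of (a, c) with exponent |K| x kills c and fixes a; symmetrically for u.\<close>
  have left: "(a, \<one>\<^bsub>K\<^esub>) \<in> S" if "(a, c) \<in> S" for a c
  proof -
    have "a [^]\<^bsub>G\<^esub> (order K * x) = a"
      unfolding xy using that S_carrier G.nat_pow_order_mult_Suc[OF fin(1)] by blast
    moreover have "c [^]\<^bsub>K\<^esub> (order K * x) = \<one>\<^bsub>K\<^esub>"
      using that S_carrier by (auto simp: K.nat_pow_pow[symmetric] K.pow_order_eq_1)
    ultimately show ?thesis using P.subgroup_nat_pow_closed[OF S that] by (metis DirProd_nat_pow)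
  qed
  have right: "(\<one>\<^bsub>G\<^esub>, c) \<in> S" if "(a, c) \<in> S" for a c
  proof -
    have "c [^]\<^bsub>K\<^esub> (order G * u) = c"
      unfolding uv using that S_carrier K.nat_pow_order_mult_Suc[OF fin(2)] by blast
    moreover have "a [^]\<^bsub>G\<^esub> (order G * u) = \<one>\<^bsub>G\<^esub>"
      using that S_carrier by (auto simp: G.nat_pow_pow[symmetric] G.pow_order_eq_1)
    ultimately show ?thesis using P.subgroup_nat_pow_closed[OF S that] by (metis DirProd_nat_pow)
  qed
  show "fst ` S \<times> snd ` S \<subseteq> S"
  proof clarify
    fix a c a' c' assume "(a, c) \<in> S" "(a', c') \<in> S"
    then have "(a, \<one>\<^bsub>K\<^esub>) \<otimes>\<^bsub>G \<times>\<times> K\<^esub> (\<one>\<^bsub>G\<^esub>, c') \<in> S"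
      using left right subgroup.m_closed[OF S] by blast
    moreover have "a \<in> carrier G" "c' \<in> carrier K"
      using S_carrier \<open>(a, c) \<in> S\<close> \<open>(a', c') \<in> S\<close> by auto
    ultimately show "(fst (a, c), snd (a', c')) \<in> S" by simp
  qed
qed

lemma subgroup_fst_image:
  assumes "group G" "group K" "subgroup S (G \<times>\<times> K)"
  shows "subgroup (fst ` S) G"
proof -
  interpret group_hom "G \<times>\<times> K" G fst
    using assms DirProd_group by (auto intro!: group_hom.intro simp: group_hom_axioms_def hom_def mult_DirProd')
  show ?thesis by (rule subgroup_img_is_subgroup[OF assms(3)])
qed

lemma subgroup_snd_image:
  assumes "group G" "group K" "subgroup S (G \<times>\<times> K)"
  shows "subgroup (snd ` S) K"
proof -
  interpret group_hom "G \<times>\<times> K" K snd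
    using assms DirProd_group by (auto intro!: group_hom.intro simp: group_hom_axioms_def hom_def mult_DirProd')
  show ?thesis by (rule subgroup_img_is_subgroup[OF assms(3)])
qed

lemma psi_DirProd_coprime:
  assumes G: "group G" and K: "group K" and cop: "coprime (order G) (order K)" and H1: "subgroup H1 G" and H2: "subgroup H2 K"
  shows "psi ((G \<times>\<times> K)\<lparr>carrier := H1 \<times> H2\<rparr>) = psi (G\<lparr>carrier := H1\<rparr>) * psi (K\<lparr>carrier := H2\<rparr>)"
proof -
  have "psi ((G \<times>\<times> K)\<lparr>carrier := H1 \<times> H2\<rparr>) = (\<Sum>(a, c)\<in>H1 \<times> H2. group.ord (G \<times>\<times> K) (a, c))"
    using psi_subgroup[OF DirProd_group[OF G K] DirProd_subgroups[OF G H1 K H2]] by (simp add: case_prod_beta')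
  also have "\<dots> = (\<Sum>(a, c)\<in>H1 \<times> H2. group.ord G a * group.ord K c)"
    using ord_DirProd_coprime[OF G K cop] subgroup.subset[OF H1] subgroup.subset[OF H2]
    by (intro sum.cong) auto
  also have "\<dots> = (\<Sum>a\<in>H1. group.ord G a) * (\<Sum>c\<in>H2. group.ord K c)"
    by (simp add: sum.cartesian_product[symmetric] sum_product)
  finally show ?thesis using psi_subgroup[OF G H1] psi_subgroup[OF K H2] by simp
qed

lemma maximal_subgroup_DirProd_coprime:
  assumes G: "group G" and K: "group K" and fin: "finite (carrier G)" "finite (carrier K)"
    and cop: "coprime (order G) (order K)" and B: "maximal_subgroup B G"
  shows "maximal_subgroup (B \<times> carrier K) (G \<times>\<times> K)"
proof -
  interpret K: group K by fact
  have sB: "subgroup B G" and "B \<noteq> carrier G" using B by (auto simp: maximal_subgroup_def)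
  have "subgroup (B \<times> carrier K) (G \<times>\<times> K)"
    using DirProd_subgroups[OF G sB K K.subgroup_self] by blast
  moreover have "B \<times> carrier K \<noteq> carrier (G \<times>\<times> K)"
    using \<open>B \<noteq> carrier G\<close> by (auto simp: times_eq_iff)
  moreover have "S = B \<times> carrier K \<or> S = carrier (G \<times>\<times> K)"
    if S: "subgroup S (G \<times>\<times> K)" "B \<times> carrier K \<subseteq> S" for S
  proof -
    have "B \<subseteq> fst ` S" using S by force
    then have "fst ` S = B \<or> fst ` S = carrier G"
      using B subgroup_fst_image[OF G K S(1)] unfolding maximal_subgroup_def by blast
    moreover have "snd ` S = carrier K"
      using S subgroup.subset[OF S(1)] subgroup.one_closed[OF sB] by force
    moreover have "S = fst ` S \<times> snd ` S"
      using subgroup_DirProd_coprime_eq_Times[OF G K fin cop S(1)] .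
    ultimately show ?thesis by (metis carrier_DirProd)
  qed
  ultimately show ?thesis unfolding maximal_subgroup_def by blast
qed

lemma psi_proper_subgroup_DirProd_cyclic_le:
  assumes A: "group A" "finite (carrier A)"
    and C: "group C" "finite (carrier C)" "cyclic_group C" "odd (order C)"
    and cop: "coprime (order A) (order C)"
    and B: "maximal_subgroup B A"
    and B_best: "\<forall>B'. maximal_subgroup B' A \<longrightarrow> psi (A\<lparr>carrier := B'\<rparr>) \<le> psi (A\<lparr>carrier := B\<rparr>)"
    and ratio: "psi A \<le> 7 * psi (A\<lparr>carrier := B\<rparr>)"
    and H: "subgroup H (A \<times>\<times> C)" "H \<noteq> carrier (A \<times>\<times> C)"
  shows "psi ((A \<times>\<times> C)\<lparr>carrier := H\<rparr>) \<le> psi ((A \<times>\<times> C)\<lparr>carrier := B \<times> carrier C\<rparr>)"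
proof -
  interpret C: group C by fact
  define H1 where "H1 = fst ` H"
  define H2 where "H2 = snd ` H"
  have H1: "subgroup H1 A" unfolding H1_def using subgroup_fst_image[OF A(1) C(1) H(1)] .
  have H2: "subgroup H2 C" unfolding H2_def using subgroup_snd_image[OF A(1) C(1) H(1)] .
  have sB: "subgroup B A" using B by (simp add: maximal_subgroup_def)
  have psi_H: "psi ((A \<times>\<times> C)\<lparr>carrier := H\<rparr>) = psi (A\<lparr>carrier := H1\<rparr>) * psi (C\<lparr>carrier := H2\<rparr>)"
    using psi_DirProd_coprime[OF A(1) C(1) cop H1 H2]
      subgroup_DirProd_coprime_eq_Times[OF A(1) C(1) A(2) C(2) cop H(1)]
    by (simp add: H1_def H2_def)
  have psi_BC: "psi ((A \<times>\<times> C)\<lparr>carrier := B \<times> carrier C\<rparr>) = psi (A\<lparr>carrier := B\<rparr>) * psi C"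
    using psi_DirProd_coprime[OF A(1) C(1) cop sB C.subgroup_self] by simp
  show ?thesis
  proof (cases "H1 = carrier A")
    case False
    then have "psi (A\<lparr>carrier := H1\<rparr>) \<le> psi (A\<lparr>carrier := B\<rparr>)"
      using psi_proper_subgroup_le_best_maximal[OF A H1 _ B_best] by blast
    moreover have "psi (C\<lparr>carrier := H2\<rparr>) \<le> psi C"
      using psi_subgroup_mono[OF C(1,2) H2 C.subgroup_self] subgroup.subset[OF H2] by simp
    ultimately show ?thesis unfolding psi_H psi_BC by (rule mult_le_mono)
  next
    case True
    then have "H2 \<noteq> carrier C"
      using H subgroup_DirProd_coprime_eq_Times[OF A(1) C(1) A(2) C(2) cop H(1)]
      by (auto simp: H1_def H2_def)
    then have "7 * psi (C\<lparr>carrier := H2\<rparr>) \<le> psi C"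
      using C.psi_proper_subgroup_cyclic_odd[OF C(2-4) H2] by blast
    have "psi (A\<lparr>carrier := H1\<rparr>) * psi (C\<lparr>carrier := H2\<rparr>) \<le> 7 * psi (A\<lparr>carrier := B\<rparr>) * psi (C\<lparr>carrier := H2\<rparr>)"
      using True ratio by simp
    also have "\<dots> \<le> psi (A\<lparr>carrier := B\<rparr>) * psi C"
      using \<open>7 * psi (C\<lparr>carrier := H2\<rparr>) \<le> psi C\<close> by (simp add: mult.commute mult.left_commute)
    finally show ?thesis unfolding psi_H psi_BC .
  qed
qed

section \<open>Subgroups of index two that are cyclic\<close>

lemma (in group) mult_inv_cancel_left: "x \<in> carrier G \<Longrightarrow> y \<in> carrier G \<Longrightarrow> x \<otimes> (inv x \<otimes> y) = y"
  by (simp add: m_assoc[symmetric])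

lemma (in group) inv_mult_cancel_left: "x \<in> carrier G \<Longrightarrow> y \<in> carrier G \<Longrightarrow> inv x \<otimes> (x \<otimes> y) = y"
  by (simp add: m_assoc[symmetric])

locale index_two_cyclic = group A for A (structure) +
  fixes B :: "'a set" and y :: 'a
  assumes finite_carrier: "finite (carrier A)"
    and subgroup_B: "subgroup B A"
    and cyclic_B: "cyclic_group (A\<lparr>carrier := B\<rparr>)"
    and index_two: "card (carrier A) = 2 * card B"
    and y_carrier: "y \<in> carrier A"
    and y_notin: "y \<notin> B"
begin

definition twist :: "'a \<Rightarrow> 'a" where
  "twist c = inv y \<otimes> c \<otimes> y \<otimes> c"

definition centralizer_y :: "'a set" where
  "centralizer_y = {c \<in> B. c \<otimes> y = y \<otimes> c}"

interpretation B: group "A\<lparr>carrier := B\<rparr>"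
  using subgroup_B subgroup.subgroup_is_group is_group by blast

lemma B_carrier: "c \<in> B \<Longrightarrow> c \<in> carrier A"
  using subgroup.subset[OF subgroup_B] by blast

lemma finite_B: "finite B"
  using finite_carrier subgroup.subset[OF subgroup_B] finite_subset by blast

lemma B_comm: "c \<in> B \<Longrightarrow> d \<in> B \<Longrightarrow> c \<otimes> d = d \<otimes> c"
  using comm_monoid.m_comm[OF comm_group.axioms(1)[OF B.cyclic_imp_abelian_group[OF cyclic_B]]] by simp

lemma B_disjoint_coset: "B \<inter> (\<lambda>c. y \<otimes> c) ` B = {}"
proof (rule ccontr)
  assume "B \<inter> (\<lambda>c. y \<otimes> c) ` B \<noteq> {}"
  then obtain c where "c \<in> B" "y \<otimes> c \<in> B" by blast
  then have "(y \<otimes> c) \<otimes> inv c \<in> B" using subgroup_B by (simp add: subgroup.m_closed subgroup.m_inv_closed)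
  then show False using y_notin y_carrier B_carrier[OF \<open>c \<in> B\<close>] by (simp add: m_assoc)
qed

lemma carrier_eq_B_Un_coset: "carrier A = B \<union> (\<lambda>c. y \<otimes> c) ` B"
proof -
  have "card ((\<lambda>c. y \<otimes> c) ` B) = card B"
    using y_carrier B_carrier by (intro card_image inj_onI) (auto dest: l_cancel[rotated])
  moreover have "(\<lambda>c. y \<otimes> c) ` B \<subseteq> carrier A" using y_carrier B_carrier by auto
  ultimately have "card (B \<union> (\<lambda>c. y \<otimes> c) ` B) = card (carrier A)"
    using index_two finite_B B_disjoint_coset by (simp add: card_Un_disjoint)
  moreover have "B \<union> (\<lambda>c. y \<otimes> c) ` B \<subseteq> carrier A" using y_carrier B_carrier by auto
  ultimately show ?thesis using finite_carrier by (metis card_subset_eq)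
qed

lemma conj_y_closed: "c \<in> B \<Longrightarrow> inv y \<otimes> c \<otimes> y \<in> B"
proof -
  assume c: "c \<in> B"
  have "c \<otimes> y \<notin> B"
  proof
    assume "c \<otimes> y \<in> B"
    then have "inv c \<otimes> (c \<otimes> y) \<in> B" using c subgroup_B by (simp add: subgroup.m_closed subgroup.m_inv_closed)
    then show False using y_notin y_carrier B_carrier[OF c] by (simp add: m_assoc[symmetric])
  qed
  then obtain b where b: "b \<in> B" "c \<otimes> y = y \<otimes> b"
    using carrier_eq_B_Un_coset y_carrier B_carrier[OF c] by blast
  then have "inv y \<otimes> c \<otimes> y = b"
    using y_carrier B_carrier[OF c] B_carrier[OF b(1)] by (simp add: m_assoc inv_mult_cancel_left)
  then show ?thesis using b(1) by simp
qed

lemma y_square_in_B: "y \<otimes> y \<in> B"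
proof (rule ccontr)
  assume "y \<otimes> y \<notin> B"
  then obtain b where "b \<in> B" "y \<otimes> y = y \<otimes> b" using carrier_eq_B_Un_coset y_carrier by blast
  then show False using y_notin y_carrier B_carrier l_cancel by metis
qed

lemma twist_in_B: "c \<in> B \<Longrightarrow> twist c \<in> B"
  unfolding twist_def using conj_y_closed subgroup_B by (simp add: subgroup.m_closed)

lemma twist_hom:
  assumes "subgroup S A" "S \<subseteq> B"
  shows "twist \<in> hom (A\<lparr>carrier := S\<rparr>) (A\<lparr>carrier := B\<rparr>)"
proof (rule homI)
  fix c d assume "c \<in> carrier (A\<lparr>carrier := S\<rparr>)" "d \<in> carrier (A\<lparr>carrier := S\<rparr>)"
  then have c: "c \<in> B" and d: "d \<in> B" using assms(2) by auto
  have "inv y \<otimes> (c \<otimes> d) \<otimes> y = (inv y \<otimes> c \<otimes> y) \<otimes> (inv y \<otimes> d \<otimes> y)"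
    using c d y_carrier B_carrier by (simp add: m_assoc mult_inv_cancel_left)
  then have "twist (c \<otimes> d) = (inv y \<otimes> c \<otimes> y) \<otimes> ((inv y \<otimes> d \<otimes> y) \<otimes> c) \<otimes> d"
    unfolding twist_def using c d y_carrier B_carrier by (simp add: m_assoc mult_inv_cancel_left)
  also have "\<dots> = twist c \<otimes> twist d"
    unfolding twist_def using c d y_carrier B_carrier B_comm[OF conj_y_closed[OF d] c] by (simp add: m_assoc)
  finally show "twist (c \<otimes>\<^bsub>A\<lparr>carrier := S\<rparr>\<^esub> d) = twist c \<otimes>\<^bsub>A\<lparr>carrier := B\<rparr>\<^esub> twist d" by simp
qed (use assms twist_in_B in auto)

lemma square_y_mult: "c \<in> B \<Longrightarrow> (y \<otimes> c) \<otimes> (y \<otimes> c) = (y \<otimes> y) \<otimes> twist c"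
  unfolding twist_def using y_carrier B_carrier by (simp add: m_assoc mult_inv_cancel_left)

lemma subgroup_centralizer_y: "subgroup centralizer_y A"
proof (rule subgroupI)
  show "centralizer_y \<subseteq> carrier A" using B_carrier by (auto simp: centralizer_y_def)
  show "centralizer_y \<noteq> {}"
    using subgroup.one_closed[OF subgroup_B] y_carrier by (auto simp: centralizer_y_def)
next
  fix a assume "a \<in> centralizer_y"
  then have a: "a \<in> B" "a \<otimes> y = y \<otimes> a" by (auto simp: centralizer_y_def)
  have "inv a \<otimes> y = inv a \<otimes> ((y \<otimes> a) \<otimes> inv a)"
    using y_carrier B_carrier[OF a(1)] by (simp add: m_assoc)
  also have "\<dots> = inv a \<otimes> ((a \<otimes> y) \<otimes> inv a)" using a(2) by simp
  also have "\<dots> = y \<otimes> inv a"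
    using y_carrier B_carrier[OF a(1)] by (simp add: m_assoc inv_mult_cancel_left)
  finally have "inv a \<otimes> y = y \<otimes> inv a" .
  then show "inv a \<in> centralizer_y"
    using a subgroup_B by (simp add: centralizer_y_def subgroup.m_inv_closed)
next
  fix a b assume "a \<in> centralizer_y" "b \<in> centralizer_y"
  then have a: "a \<in> B" "a \<otimes> y = y \<otimes> a" and b: "b \<in> B" "b \<otimes> y = y \<otimes> b"
    by (auto simp: centralizer_y_def)
  then have "a \<otimes> b \<otimes> y = y \<otimes> (a \<otimes> b)"
    using y_carrier B_carrier by (metis m_assoc)
  then show "a \<otimes> b \<in> centralizer_y"
    using a b subgroup_B by (simp add: centralizer_y_def subgroup.m_closed)
qed

lemma y_square_twist_in_centralizer_y:
  assumes c: "c \<in> B"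
  shows "(y \<otimes> y) \<otimes> twist c \<in> centralizer_y"
proof -
  \<comment> \<open>(y c) (y c) lies in B, so it commutes with c; it also commutes with y c, hence with y.\<close>
  define x where "x = y \<otimes> c"
  have x: "x \<in> carrier A" using c y_carrier B_carrier by (simp add: x_def)
  have w: "x \<otimes> x \<in> B"
    using square_y_mult[OF c] y_square_in_B twist_in_B[OF c] subgroup_B by (simp add: x_def subgroup.m_closed)
  have "y = x \<otimes> inv c" using c y_carrier B_carrier by (simp add: x_def m_assoc)
  then have "(x \<otimes> x) \<otimes> y = x \<otimes> ((x \<otimes> x) \<otimes> inv c)" using x c B_carrier by (simp add: m_assoc)
  also have "\<dots> = x \<otimes> (inv c \<otimes> (x \<otimes> x))"
    using B_comm[OF w subgroup.m_inv_closed[OF subgroup_B c]] by simp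
  also have "\<dots> = y \<otimes> (x \<otimes> x)"
    using \<open>y = x \<otimes> inv c\<close> x c B_carrier by (simp add: m_assoc)
  finally show ?thesis using w square_y_mult[OF c] by (simp add: centralizer_y_def x_def)
qed

lemma twist_centralizer_y:
  assumes "k \<in> centralizer_y"
  shows "twist k = k \<otimes> k"
proof -
  have "k \<in> B" "k \<otimes> y = y \<otimes> k" using assms by (auto simp: centralizer_y_def)
  then have "inv y \<otimes> k \<otimes> y = k" using y_carrier B_carrier by (simp add: m_assoc inv_mult_cancel_left)
  then show ?thesis by (simp add: twist_def)
qed

lemma card_centralizer_y_le: "card centralizer_y \<le> 2 * card (twist ` B)"
proof -
  interpret Z: group "A\<lparr>carrier := centralizer_y\<rparr>"
    using subgroup_centralizer_y subgroup.subgroup_is_group is_group by blast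
  have "centralizer_y \<subseteq> B" by (auto simp: centralizer_y_def)
  then have "finite centralizer_y" using finite_B finite_subset by blast
  define I where "I = kernel (A\<lparr>carrier := centralizer_y\<rparr>) (A\<lparr>carrier := B\<rparr>) twist"
  have "card centralizer_y = card I * card (twist ` centralizer_y)"
    using hom_sum_fibres[OF Z.is_group B.is_group _ twist_hom[OF subgroup_centralizer_y], of "\<lambda>_. 1"]
      \<open>finite centralizer_y\<close> \<open>centralizer_y \<subseteq> B\<close> by (simp add: I_def)
  moreover have "I \<subseteq> {t \<in> B. t \<otimes> t = \<one>}"
    using \<open>centralizer_y \<subseteq> B\<close> twist_centralizer_y by (auto simp: I_def kernel_def)
  then have "card I \<le> card {t \<in> B. t \<otimes> t = \<one>}" using finite_B by (intro card_mono) auto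
  then have "card I \<le> 2"
    using B.card_square_roots_one_cyclic_le_2[OF _ cyclic_B] finite_B by simp
  moreover have "card (twist ` centralizer_y) \<le> card (twist ` B)"
    using \<open>centralizer_y \<subseteq> B\<close> finite_B by (intro card_mono image_mono) auto
  ultimately show ?thesis by (metis mult_le_mono)
qed

lemma card_kernel_mult_psi_centralizer_y_le:
  "card (kernel (A\<lparr>carrier := B\<rparr>) (A\<lparr>carrier := B\<rparr>) twist) * psi (A\<lparr>carrier := centralizer_y\<rparr>)
     \<le> 2 * psi (A\<lparr>carrier := B\<rparr>)"
proof -
  define I where "I = kernel (A\<lparr>carrier := B\<rparr>) (A\<lparr>carrier := B\<rparr>) twist"
  define N where "N = twist ` B"
  have "card B = card I * card N"
    using hom_sum_fibres[OF B.is_group B.is_group _ twist_hom[OF subgroup_B], of "\<lambda>_. 1"] finite_B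
    by (simp add: I_def N_def)
  then have "card N > 0" using finite_B subgroup.one_closed[OF subgroup_B] by (cases "card N") (auto simp: card_gt_0_iff)
  have "subgroup centralizer_y (A\<lparr>carrier := B\<rparr>)"
    using subgroup_incl[OF subgroup_centralizer_y subgroup_B] by (auto simp: centralizer_y_def)
  then have "card B * psi (A\<lparr>carrier := centralizer_y\<rparr>) \<le> card centralizer_y * psi (A\<lparr>carrier := B\<rparr>)"
    using B.card_mult_psi_subgroup_cyclic_le[OF _ cyclic_B] finite_B by (simp add: order_def)
  also have "\<dots> \<le> 2 * card N * psi (A\<lparr>carrier := B\<rparr>)"
    using card_centralizer_y_le by (simp add: N_def)
  finally have "card N * (card I * psi (A\<lparr>carrier := centralizer_y\<rparr>)) \<le> card N * (2 * psi (A\<lparr>carrier := B\<rparr>))"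
    using \<open>card B = card I * card N\<close> by (simp add: ac_simps)
  then show ?thesis using \<open>card N > 0\<close> by (simp add: I_def)
qed

lemma sum_ord_coset_le: "(\<Sum>c\<in>B. ord (y \<otimes> c)) \<le> 4 * psi (A\<lparr>carrier := B\<rparr>)"
proof -
  define I where "I = kernel (A\<lparr>carrier := B\<rparr>) (A\<lparr>carrier := B\<rparr>) twist"
  have fibres: "(\<Sum>c\<in>B. ord ((y \<otimes> y) \<otimes> twist c)) = card I * (\<Sum>z\<in>twist ` B. ord ((y \<otimes> y) \<otimes> z))"
    using hom_sum_fibres[OF B.is_group B.is_group _ twist_hom[OF subgroup_B], of "\<lambda>z. ord ((y \<otimes> y) \<otimes> z)"]
      finite_B by (simp add: I_def)
  have "inj_on (\<lambda>z. (y \<otimes> y) \<otimes> z) (twist ` B)"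
    using y_carrier twist_in_B B_carrier by (intro inj_onI) (auto dest: l_cancel[rotated])
  then have "(\<Sum>z\<in>twist ` B. ord ((y \<otimes> y) \<otimes> z)) = (\<Sum>w\<in>(\<lambda>z. (y \<otimes> y) \<otimes> z) ` twist ` B. ord w)"
    by (simp add: sum.reindex)
  also have "\<dots> \<le> (\<Sum>w\<in>centralizer_y. ord w)"
    using y_square_twist_in_centralizer_y finite_B by (intro sum_mono2) (auto simp: centralizer_y_def)
  finally have translate: "(\<Sum>z\<in>twist ` B. ord ((y \<otimes> y) \<otimes> z)) \<le> psi (A\<lparr>carrier := centralizer_y\<rparr>)"
    using psi_subgroup[OF is_group subgroup_centralizer_y] by simp
  have "(\<Sum>c\<in>B. ord (y \<otimes> c)) \<le> (\<Sum>c\<in>B. 2 * ord ((y \<otimes> y) \<otimes> twist c))"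
    using ord_le_two_mult_ord_square square_y_mult y_carrier B_carrier by (intro sum_mono) (metis m_closed)
  also have "\<dots> = 2 * (card I * (\<Sum>z\<in>twist ` B. ord ((y \<otimes> y) \<otimes> z)))"
    using fibres by (simp add: sum_distrib_left[symmetric])
  also have "\<dots> \<le> 2 * (card I * psi (A\<lparr>carrier := centralizer_y\<rparr>))"
    using translate by simp
  also have "\<dots> \<le> 2 * (2 * psi (A\<lparr>carrier := B\<rparr>))"
    using card_kernel_mult_psi_centralizer_y_le unfolding I_def by (rule mult_le_mono2)
  finally show ?thesis by simp
qed

lemma psi_le_5_psi_B: "psi A \<le> 5 * psi (A\<lparr>carrier := B\<rparr>)"
proof -
  have "psi A = (\<Sum>u\<in>B. ord u) + (\<Sum>u\<in>(\<lambda>c. y \<otimes> c) ` B. ord u)"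
    unfolding psi_def using carrier_eq_B_Un_coset B_disjoint_coset finite_B by (simp add: sum.union_disjoint)
  also have "(\<Sum>u\<in>B. ord u) = psi (A\<lparr>carrier := B\<rparr>)"
    using psi_subgroup[OF is_group subgroup_B] by simp
  also have "(\<Sum>u\<in>(\<lambda>c. y \<otimes> c) ` B. ord u) = (\<Sum>c\<in>B. ord (y \<otimes> c))"
    using y_carrier B_carrier by (intro sum.reindex_cong[OF _ refl refl] inj_onI) (auto dest: l_cancel[rotated])
  finally show ?thesis using sum_ord_coset_le by simp
qed

end

lemma psi_index_two_cyclic_le:
  assumes "group A" "finite (carrier A)" "subgroup B A"
    and "cyclic_group (A\<lparr>carrier := B\<rparr>)" "card (carrier A) = 2 * card B"
  shows "psi A \<le> 5 * psi (A\<lparr>carrier := B\<rparr>)"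
proof -
  have "finite B" using assms(2,3) subgroup.subset finite_subset by blast
  moreover have "B \<noteq> {}" using subgroup.one_closed[OF assms(3)] by blast
  ultimately have "card B < card (carrier A)" using assms(5) by (simp add: card_gt_0_iff)
  then have "\<not> carrier A \<subseteq> B" using \<open>finite B\<close> by (meson card_mono not_le)
  then obtain y where "y \<in> carrier A" "y \<notin> B" by blast
  then interpret index_two_cyclic A B y
    using assms by (intro index_two_cyclic.intro index_two_cyclic_axioms.intro) auto
  show ?thesis by (rule psi_le_5_psi_B)
qed

theorem lemma3p14:
  fixes A :: "('a, 'b) monoid_scheme" and B :: "'a set" and m :: nat
  assumes "group A" and "finite (carrier A)" and "card (carrier A) > 1"
    and "odd m" and "m > 0" and "coprime (card (carrier A)) m"
    and "maximal_subgroup B A"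
    and "\<forall>B'. maximal_subgroup B' A \<longrightarrow> psi (A\<lparr>carrier := B'\<rparr>) \<le> psi (A\<lparr>carrier := B\<rparr>)"
  shows
   "(real (psi A) / real (psi (A\<lparr>carrier := B\<rparr>)) \<le> 7 \<longrightarrow>
      maximal_subgroup (B \<times> carrier (Cyc m)) (A \<times>\<times> Cyc m) \<and>
      (\<forall>H. maximal_subgroup H (A \<times>\<times> Cyc m) \<longrightarrow>
          psi ((A \<times>\<times> Cyc m)\<lparr>carrier := H\<rparr>) \<le> psi ((A \<times>\<times> Cyc m)\<lparr>carrier := B \<times> carrier (Cyc m)\<rparr>)) \<and>
      (\<forall>H. subgroup H (A \<times>\<times> Cyc m) \<and> H \<noteq> carrier (A \<times>\<times> Cyc m) \<longrightarrow>
          psi ((A \<times>\<times> Cyc m)\<lparr>carrier := H\<rparr>) \<le> psi ((A \<times>\<times> Cyc m)\<lparr>carrier := B \<times> carrier (Cyc m)\<rparr>)))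
    \<and>
    (cyclic_group (A\<lparr>carrier := B\<rparr>) \<and> card (carrier A) = 2 * card B \<longrightarrow>
      real (psi A) / real (psi (A\<lparr>carrier := B\<rparr>)) \<le> 7 \<and>
      maximal_subgroup (B \<times> carrier (Cyc m)) (A \<times>\<times> Cyc m) \<and>
      (\<forall>H. maximal_subgroup H (A \<times>\<times> Cyc m) \<longrightarrow>
          psi ((A \<times>\<times> Cyc m)\<lparr>carrier := H\<rparr>) \<le> psi ((A \<times>\<times> Cyc m)\<lparr>carrier := B \<times> carrier (Cyc m)\<rparr>)) \<and>
      (\<forall>H. subgroup H (A \<times>\<times> Cyc m) \<and> H \<noteq> carrier (A \<times>\<times> Cyc m) \<longrightarrow>
          psi ((A \<times>\<times> Cyc m)\<lparr>carrier := H\<rparr>) \<le> psi ((A \<times>\<times> Cyc m)\<lparr>carrier := B \<times> carrier (Cyc m)\<rparr>)))"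
proof -
  have sB: "subgroup B A" using assms(7) by (simp add: maximal_subgroup_def)
  have C: "group (Cyc m)" "finite (carrier (Cyc m))" "cyclic_group (Cyc m)" "order (Cyc m) = m"
    using assms(5) by (simp_all add: cyclic_integer_mod_group order_integer_mod_group carrier_integer_mod_group)
  have cop: "coprime (order A) (order (Cyc m))" using assms(6) C(4) by (simp add: order_def)
  have max_BC: "maximal_subgroup (B \<times> carrier (Cyc m)) (A \<times>\<times> Cyc m)"
    by (rule maximal_subgroup_DirProd_coprime[OF assms(1) C(1) assms(2) C(2) cop assms(7)])
  have best_BC: "psi ((A \<times>\<times> Cyc m)\<lparr>carrier := H\<rparr>) \<le> psi ((A \<times>\<times> Cyc m)\<lparr>carrier := B \<times> carrier (Cyc m)\<rparr>)"
    if "psi A \<le> 7 * psi (A\<lparr>carrier := B\<rparr>)" "subgroup H (A \<times>\<times> Cyc m)" "H \<noteq> carrier (A \<times>\<times> Cyc m)" for H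
    using psi_proper_subgroup_DirProd_cyclic_le[OF assms(1,2) C(1-3) _ cop assms(7,8) that] C(4) assms(4)
    by simp
  have "0 < psi (A\<lparr>carrier := B\<rparr>)"
    using psi_gt_0[OF subgroup.subgroup_is_group[OF sB assms(1)]] assms(2) subgroup.subset[OF sB]
    by (simp add: finite_subset)
  then have ratio: "real (psi A) / real (psi (A\<lparr>carrier := B\<rparr>)) \<le> 7 \<longleftrightarrow> psi A \<le> 7 * psi (A\<lparr>carrier := B\<rparr>)"
    by (simp add: pos_divide_le_eq) linarith
  have "psi A \<le> 7 * psi (A\<lparr>carrier := B\<rparr>)"
    if "cyclic_group (A\<lparr>carrier := B\<rparr>)" "card (carrier A) = 2 * card B"
    using psi_index_two_cyclic_le[OF assms(1,2) sB that] by simp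
  then show ?thesis using max_BC best_BC ratio maximal_subgroup_imp_proper by blast
qed

end
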